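(* Let $n\ge1$, $d\in\mathbb{R}$ and $\varepsilon,\theta\in(0,1)$. There is a constant $\rho_0>0$ depending only on $n,d,\varepsilon,\theta$ such that for every $\rho\ge\rho_0$, $$\varepsilon(\rho+|x|^2)^{d/2}\le\mathcal{B}\big[(\rho+|\cdot|^2)^{d/2}\big](x)\le\theta^{-1}(\rho+|x|^2)^{d/2}\qquad(x\in\mathbb{R}^n).$$ Moreover, $\rho_0$ stays bounded when $d$ ranges over a bounded set.
   Context: $\mathcal{B}=(I-\Delta)^{-1}$ on $\mathbb{R}^n$, i.e. $\mathcal{B}\varphi=B*\varphi$ with $B=\mathcal{F}^{-1}((1+|\xi|^2)^{-1})$. *)

theory Defs
  imports "HOL-Analysis.Analysis"
begin

text \<open>Bessel kernel B = inverse Fourier transform of (1+|xi|^2)^(-1) on R^n,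
  given by its standard heat-kernel (subordination) representation
  B(x) = int_0^infty (4 pi t)^(-n/2) exp(-t - |x|^2/(4t)) dt, with n = DIM('a).\<close>
definition bessel_kernel :: "'a::euclidean_space \<Rightarrow> real" where
  "bessel_kernel x =
     (LBINT t:{0<..}. (4 * pi * t) powr (- real DIM('a) / 2) * exp (- t - (norm x)\<^sup>2 / (4 * t)))"

text \<open>The operator (I - Laplacian)^(-1): convolution with the Bessel kernel.\<close>
definition bessel_op :: "('a::euclidean_space \<Rightarrow> real) \<Rightarrow> 'a \<Rightarrow> real" where
  "bessel_op \<phi> x = (\<integral>y. bessel_kernel (x - y) * \<phi> y \<partial>lborel)"

end

theory Submission
  imports Defs "HOL-Probability.Distributions"
begin

(* The Bessel kernel is the subordinated heat kernel, B = int_0^oo e^(-t) h_t dt.  Every heat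
   kernel h_t is a probability density, hence so is B; and the Gaussian decay of h_t gives B a
   finite exponential moment M = int B(z) e^(|z|/4) dz.  On the other side, the logarithm of
   sqrt (rho + |y|^2) is (1/sqrt rho)-Lipschitz in y, so for 8|d| <= sqrt rho the weight
   w(y) = (rho + |y|^2)^(d/2) satisfies |w(y) - w(x)| <= (8|d|/sqrt rho) e^(|x-y|/4) w(x).
   Averaging this against the probability density B(x - .) yields
   |B w(x) - w(x)| <= (8|d| M/sqrt rho) w(x), a fraction of w(x) that is small uniformly in
   |d| <= D once rho is large. *)

lemma abs_exp_minus_one_le: "\<bar>exp (a::real) - 1\<bar> \<le> \<bar>a\<bar> * exp \<bar>a\<bar>"
proof (cases "0 \<le> a")
  case True
  have "(1 - a) * exp a \<le> exp (- a) * exp a"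
    using exp_ge_add_one_self[of "- a"] by (intro mult_right_mono) auto
  with True show ?thesis by (simp add: exp_minus algebra_simps)
next
  case False
  have "1 - exp a \<le> - a" using exp_ge_add_one_self[of a] by linarith
  also have "\<dots> \<le> - a * exp (- a)" using False by simp
  finally show ?thesis using False by simp
qed

lemma abs_ln_diff_le:
  fixes p q r :: real
  assumes "0 < r" "r \<le> p" "r \<le> q"
  shows "\<bar>ln q - ln p\<bar> \<le> \<bar>q - p\<bar> / r"
proof -
  have "ln b - ln a \<le> \<bar>b - a\<bar> / r" if "r \<le> a" "r \<le> b" for a b
  proof -
    have "ln b - ln a = ln (b / a)" using assms that by (simp add: ln_div)
    also have "\<dots> \<le> b / a - 1" using assms that by (intro ln_le_minus_one) auto
    also have "\<dots> = (b - a) / a" using assms that by (simp add: field_simps)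
    also have "\<dots> \<le> \<bar>b - a\<bar> / r" using assms that by (simp add: frac_le)
    finally show ?thesis .
  qed
  from this[of p q] this[of q p] assms show ?thesis by (simp add: abs_minus_commute)
qed

lemma abs_sqrt_add_norm_square_diff_le:
  fixes x y :: "'a::real_normed_vector"
  assumes "0 \<le> c"
  shows "\<bar>sqrt (c + (norm y)\<^sup>2) - sqrt (c + (norm x)\<^sup>2)\<bar> \<le> norm (y - x)"
proof -
  have "sqrt (c + (norm z)\<^sup>2) = norm (sqrt c, z)" for z :: 'a
    using assms by (simp add: norm_Pair)
  then show ?thesis
    using norm_triangle_ineq3[of "(sqrt c, y)" "(sqrt c, x)"] by (simp add: norm_Pair)
qed

lemma abs_ln_sqrt_add_norm_square_diff_le:
  fixes x y :: "'a::real_normed_vector"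
  assumes \<rho>: "0 < \<rho>"
  shows "\<bar>ln (sqrt (\<rho> + (norm y)\<^sup>2)) - ln (sqrt (\<rho> + (norm x)\<^sup>2))\<bar> \<le> norm (x - y) / sqrt \<rho>"
proof -
  have "\<bar>ln (sqrt (\<rho> + (norm y)\<^sup>2)) - ln (sqrt (\<rho> + (norm x)\<^sup>2))\<bar>
      \<le> \<bar>sqrt (\<rho> + (norm y)\<^sup>2) - sqrt (\<rho> + (norm x)\<^sup>2)\<bar> / sqrt \<rho>"
    using \<rho> by (intro abs_ln_diff_le) auto
  also have "\<dots> \<le> norm (x - y) / sqrt \<rho>"
    using \<rho> abs_sqrt_add_norm_square_diff_le[of \<rho> y x]
    by (simp add: divide_right_mono norm_minus_commute)
  finally show ?thesis .
qed

lemma abs_powr_shifted_norm_square_diff_le: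
  fixes x y :: "'a::real_normed_vector"
  assumes \<rho>: "0 < \<rho>" and d: "8 * \<bar>d\<bar> \<le> sqrt \<rho>"
  shows "\<bar>(\<rho> + (norm y)\<^sup>2) powr (d / 2) - (\<rho> + (norm x)\<^sup>2) powr (d / 2)\<bar>
    \<le> 8 * \<bar>d\<bar> / sqrt \<rho> * (\<rho> + (norm x)\<^sup>2) powr (d / 2) * exp (norm (x - y) / 4)"
proof -
  define L where "L z = ln (sqrt (\<rho> + (norm z)\<^sup>2))" for z :: 'a
  define s where "s = norm (x - y)"
  define v where "v = \<bar>d\<bar> / sqrt \<rho> * s"
  have weight: "(\<rho> + (norm z)\<^sup>2) powr (d / 2) = exp (d * L z)" for z
  proof -
    have "0 < \<rho> + (norm z)\<^sup>2"
      using \<rho> by (simp add: add_pos_nonneg)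
    then show ?thesis
      by (simp add: powr_def L_def ln_sqrt)
  qed
  have "\<bar>d * (L y - L x)\<bar> \<le> \<bar>d\<bar> * (s / sqrt \<rho>)"
    unfolding L_def s_def abs_mult
    by (rule mult_left_mono[OF abs_ln_sqrt_add_norm_square_diff_le[OF \<rho>] abs_ge_zero])
  then have "\<bar>exp (d * (L y - L x)) - 1\<bar> \<le> v * exp v"
    using abs_exp_minus_one_le[of "d * (L y - L x)"] unfolding v_def
    by (smt (verit) abs_ge_zero exp_ge_zero exp_le_cancel_iff mult_mono times_divide_eq_left times_divide_eq_right)
  also have "\<dots> \<le> \<bar>d\<bar> / sqrt \<rho> * (8 * exp (s / 8)) * exp (s / 8)"
  proof (rule mult_mono)
    have "s \<le> 8 * exp (s / 8)"
      using exp_ge_add_one_self[of "s / 8"] by linarith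
    with \<rho> show "v \<le> \<bar>d\<bar> / sqrt \<rho> * (8 * exp (s / 8))"
      unfolding v_def by (intro mult_left_mono) auto
    have "\<bar>d\<bar> / sqrt \<rho> \<le> 1 / 8"
      using \<rho> d by (simp add: field_simps)
    from mult_right_mono[OF this norm_ge_zero[of "x - y"]] show "exp v \<le> exp (s / 8)"
      by (simp add: v_def s_def)
  qed (use \<rho> in \<open>auto simp: v_def s_def\<close>)
  also have "\<dots> = 8 * \<bar>d\<bar> / sqrt \<rho> * exp (s / 4)"
    by (simp add: mult_exp_exp)
  finally have "exp (d * L x) * \<bar>exp (d * (L y - L x)) - 1\<bar> \<le> exp (d * L x) * (8 * \<bar>d\<bar> / sqrt \<rho> * exp (s / 4))"
    by (rule mult_left_mono) simp
  moreover have "exp (d * L y) - exp (d * L x) = exp (d * L x) * (exp (d * (L y - L x)) - 1)"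
    by (simp add: algebra_simps flip: exp_add)
  ultimately show ?thesis
    unfolding weight s_def by (simp add: abs_mult mult_ac)
qed

lemma abs_integral_kernel_mult_diff_le:
  fixes k w f :: "'b \<Rightarrow> real"
  assumes k: "has_bochner_integral M k \<kappa>" and kw: "has_bochner_integral M (\<lambda>y. k y * w y) m"
    and f[measurable]: "f \<in> borel_measurable M"
    and k_nonneg: "\<And>y. 0 \<le> k y" and close: "\<And>y. \<bar>f y - a\<bar> \<le> b * w y"
  shows "integrable M (\<lambda>y. k y * f y)" and "\<bar>(\<integral>y. k y * f y \<partial>M) - a * \<kappa>\<bar> \<le> b * m"
proof -
  have ik: "integrable M k" and ikw: "integrable M (\<lambda>y. k y * w y)"
    using k kw by (auto simp: has_bochner_integral_iff)
  have [measurable]: "k \<in> borel_measurable M"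
    using ik by auto
  have pointwise: "\<bar>k y * f y - a * k y\<bar> \<le> b * (k y * w y)" for y
  proof -
    have "\<bar>k y * f y - a * k y\<bar> = k y * \<bar>f y - a\<bar>"
      using k_nonneg[of y] by (metis abs_mult abs_of_nonneg mult.commute right_diff_distrib)
    also have "\<dots> \<le> k y * (b * w y)"
      by (rule mult_left_mono[OF close k_nonneg])
    finally show ?thesis by (simp add: mult_ac)
  qed
  have idiff: "integrable M (\<lambda>y. k y * f y - a * k y)"
  proof (rule Bochner_Integration.integrable_bound)
    show "integrable M (\<lambda>y. b * (k y * w y))"
      using ikw by simp
    show "AE y in M. norm (k y * f y - a * k y) \<le> norm (b * (k y * w y))"
      using pointwise by (auto intro: order_trans[OF _ abs_ge_self])
  qed measurable
  have "integrable M (\<lambda>y. (k y * f y - a * k y) + a * k y)"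
    using idiff ik by (intro Bochner_Integration.integrable_add) auto
  then show ikf: "integrable M (\<lambda>y. k y * f y)"
    by simp
  have "(\<integral>y. k y * f y \<partial>M) - a * \<kappa> = (\<integral>y. k y * f y - a * k y \<partial>M)"
    using ikf ik k by (simp add: has_bochner_integral_iff)
  also have "\<bar>\<dots>\<bar> \<le> (\<integral>y. \<bar>k y * f y - a * k y\<bar> \<partial>M)"
    by (rule integral_abs_bound)
  also have "\<dots> \<le> (\<integral>y. b * (k y * w y) \<partial>M)"
    using idiff ikw pointwise by (intro integral_mono) auto
  also have "\<dots> = b * m"
    using kw by (simp add: has_bochner_integral_iff)
  finally show "\<bar>(\<integral>y. k y * f y \<partial>M) - a * \<kappa>\<bar> \<le> b * m" .
qed

lemma has_bochner_integral_lborel_reflect: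
  fixes f :: "'a::euclidean_space \<Rightarrow> 'b::{banach, second_countable_topology}"
  assumes f: "has_bochner_integral lborel f I"
  shows "has_bochner_integral lborel (\<lambda>y. f (x - y)) I"
proof -
  have reflect: "distr lborel borel (\<lambda>y. x - y) = (lborel :: 'a measure)"
    using lborel_affine[of "-1 :: real" x] by (simp add: density_1)
  have [measurable]: "f \<in> borel_measurable borel"
    using f by (auto dest: has_bochner_integral_integrable)
  have "has_bochner_integral (distr lborel borel (\<lambda>y. x - y)) f I"
    unfolding reflect by (rule f)
  then show ?thesis
    by (simp add: has_bochner_integral_iff integrable_distr_eq integral_distr)
qed

lemma nn_integral_indicator_Ioi_exp:
  fixes c :: real
  assumes c: "0 < c"
  shows "(\<integral>\<^sup>+t. ennreal (indicator {0<..} t * exp (- (c * t))) \<partial>lborel) = ennreal (1 / c)"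
proof -
  have "AE t in lborel. ennreal (indicator {0<..} t * exp (- (c * t)))
      = ennreal (1 / c) * ennreal (exponential_density c t)"
    using AE_lborel_singleton[of 0]
    by eventually_elim (use c in \<open>auto simp: exponential_density_def ennreal_mult[symmetric] mult_ac\<close>)
  then have "(\<integral>\<^sup>+t. ennreal (indicator {0<..} t * exp (- (c * t))) \<partial>lborel)
      = ennreal (1 / c) * (\<integral>\<^sup>+t. ennreal (exponential_density c t) \<partial>lborel)"
    by (simp add: nn_integral_cong_AE nn_integral_cmult)
  also have "(\<integral>\<^sup>+t. ennreal (exponential_density c t) \<partial>lborel) = 1"
    using nn_integral_erlang_ith_moment[OF c, of 0 0] by simp
  finally show ?thesis
    by simp
qed

definition heat_kernel :: "real \<Rightarrow> 'a::euclidean_space \<Rightarrow> real" where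
  "heat_kernel t z = (4 * pi * t) powr (- real DIM('a) / 2) * exp (- (norm z)\<^sup>2 / (4 * t))"

lemma heat_kernel_nonneg: "0 \<le> heat_kernel t z"
  by (simp add: heat_kernel_def)

lemma borel_measurable_heat_kernel[measurable]:
  assumes [measurable]: "f \<in> borel_measurable M" "g \<in> borel_measurable M"
  shows "(\<lambda>x. heat_kernel (f x) (g x)) \<in> borel_measurable M"
  unfolding heat_kernel_def by measurable

lemma heat_kernel_eq_prod_normal_density:
  fixes z :: "'a::euclidean_space"
  assumes t: "0 < t"
  shows "heat_kernel t z = (\<Prod>b\<in>Basis. normal_density 0 (sqrt (2 * t)) (z \<bullet> b))"
proof -
  have "normal_density 0 (sqrt (2 * t)) x = exp (- x\<^sup>2 / (4 * t)) / sqrt (4 * pi * t)" for x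
    using t by (simp add: normal_density_def real_sqrt_mult power_mult_distrib)
  then have "(\<Prod>b\<in>Basis. normal_density 0 (sqrt (2 * t)) (z \<bullet> b))
      = exp (- (\<Sum>b\<in>Basis. (z \<bullet> b)\<^sup>2) / (4 * t)) / sqrt (4 * pi * t) ^ DIM('a)"
    by (simp add: prod_dividef exp_sum sum_divide_distrib flip: sum_negf)
  also have "sqrt (4 * pi * t) ^ DIM('a) = (4 * pi * t) powr (real DIM('a) / 2)"
    using t by (simp add: powr_half_sqrt[symmetric] powr_realpow[symmetric] powr_powr)
  also have "(\<Sum>b\<in>Basis. (z \<bullet> b)\<^sup>2) = (norm z)\<^sup>2"
    by (simp only: power2_norm_eq_inner, subst euclidean_inner, simp add: power2_eq_square)
  also have "exp (- (norm z)\<^sup>2 / (4 * t)) / (4 * pi * t) powr (real DIM('a) / 2) = heat_kernel t z"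
    by (simp add: heat_kernel_def powr_minus_divide)
  finally show ?thesis ..
qed

lemma nn_integral_heat_kernel:
  assumes t: "0 < t"
  shows "(\<integral>\<^sup>+z. ennreal (heat_kernel t (z::'a::euclidean_space)) \<partial>lborel) = 1"
proof -
  have "(\<integral>\<^sup>+z. ennreal (heat_kernel t (z::'a)) \<partial>lborel)
      = (\<integral>\<^sup>+z. (\<Prod>b\<in>Basis. ennreal (normal_density 0 (sqrt (2 * t)) ((z::'a) \<bullet> b))) \<partial>lborel)"
    using t by (simp add: heat_kernel_eq_prod_normal_density prod_ennreal)
  also have "\<dots> = (\<Prod>b\<in>(Basis::'a set). \<integral>\<^sup>+x. ennreal (normal_density 0 (sqrt (2 * t)) x) \<partial>lborel)"
    by (rule nn_integral_lborel_prod) auto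
  also have "\<dots> = 1"
    using prob_space.emeasure_space_1[OF prob_space_normal_density, of "sqrt (2 * t)" 0] t
    by (simp add: emeasure_density)
  finally show ?thesis .
qed

lemma heat_kernel_mult_exp_norm_le:
  fixes z :: "'a::euclidean_space"
  assumes t: "0 < t"
  shows "heat_kernel t z * exp (norm z / 4) \<le> 2 powr (real DIM('a) / 2) * exp (t / 8) * heat_kernel (2 * t) z"
proof -
  have "- (norm z)\<^sup>2 / (4 * t) + norm z / 4 \<le> t / 8 - (norm z)\<^sup>2 / (4 * (2 * t))"
  proof -
    have "(t / 8 - (norm z)\<^sup>2 / (4 * (2 * t))) - (- (norm z)\<^sup>2 / (4 * t) + norm z / 4) = (t - norm z)\<^sup>2 / (8 * t)"
      using t by (simp add: field_simps power2_eq_square)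
    moreover have "0 \<le> (t - norm z)\<^sup>2 / (8 * t)"
      using t by simp
    ultimately show ?thesis
      by linarith
  qed
  then have exp_le: "exp (- (norm z)\<^sup>2 / (4 * t)) * exp (norm z / 4) \<le> exp (t / 8) * exp (- (norm z)\<^sup>2 / (4 * (2 * t)))"
    by (simp flip: exp_add)
  have "(4 * pi * (2 * t)) powr (real DIM('a) / 2) = 2 powr (real DIM('a) / 2) * (4 * pi * t) powr (real DIM('a) / 2)"
    using t by (simp add: powr_mult[symmetric] mult_ac)
  then have scale: "(4 * pi * t) powr (- real DIM('a) / 2) = 2 powr (real DIM('a) / 2) * (4 * pi * (2 * t)) powr (- real DIM('a) / 2)"
    using t by (simp add: powr_minus_divide)
  have "heat_kernel t z * exp (norm z / 4)
      = 2 powr (real DIM('a) / 2) * (4 * pi * (2 * t)) powr (- real DIM('a) / 2)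
        * (exp (- (norm z)\<^sup>2 / (4 * t)) * exp (norm z / 4))"
    unfolding heat_kernel_def scale by (simp only: mult_ac)
  also have "\<dots> \<le> 2 powr (real DIM('a) / 2) * (4 * pi * (2 * t)) powr (- real DIM('a) / 2)
        * (exp (t / 8) * exp (- (norm z)\<^sup>2 / (4 * (2 * t))))"
    by (rule mult_left_mono[OF exp_le]) simp
  also have "\<dots> = 2 powr (real DIM('a) / 2) * exp (t / 8) * heat_kernel (2 * t) z"
    unfolding heat_kernel_def by (simp only: mult_ac)
  finally show ?thesis .
qed

lemma nn_integral_heat_kernel_mult_exp_norm_le:
  assumes t: "0 < t"
  shows "(\<integral>\<^sup>+z. ennreal (heat_kernel t (z::'a::euclidean_space)) * ennreal (exp (norm z / 4)) \<partial>lborel)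
    \<le> ennreal (2 powr (real DIM('a) / 2) * exp (t / 8))"
proof -
  have "(\<integral>\<^sup>+z. ennreal (heat_kernel t (z::'a)) * ennreal (exp (norm z / 4)) \<partial>lborel)
      \<le> (\<integral>\<^sup>+z. ennreal (2 powr (real DIM('a) / 2) * exp (t / 8)) * ennreal (heat_kernel (2 * t) (z::'a)) \<partial>lborel)"
    by (intro nn_integral_mono)
       (use heat_kernel_mult_exp_norm_le[OF t] in \<open>simp add: heat_kernel_nonneg flip: ennreal_mult\<close>)
  also have "\<dots> = ennreal (2 powr (real DIM('a) / 2) * exp (t / 8))"
    using t by (simp add: nn_integral_cmult nn_integral_heat_kernel)
  finally show ?thesis .
qed

definition bessel_kernel_ennreal :: "'a::euclidean_space \<Rightarrow> ennreal" where
  "bessel_kernel_ennreal z = (\<integral>\<^sup>+t. ennreal (indicator {0<..} t * exp (- t) * heat_kernel t z) \<partial>lborel)"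

lemma borel_measurable_bessel_kernel_ennreal[measurable]: "bessel_kernel_ennreal \<in> borel_measurable borel"
  unfolding bessel_kernel_ennreal_def[abs_def] by measurable

lemma bessel_kernel_eq_enn2real: "bessel_kernel z = enn2real (bessel_kernel_ennreal z)"
proof -
  have integrand: "(\<lambda>t. indicator {0<..} t *\<^sub>R ((4 * pi * t) powr (- real DIM('a) / 2) * exp (- t - (norm z)\<^sup>2 / (4 * t))))
      = (\<lambda>t. indicator {0<..} t * exp (- t) * heat_kernel t z)"
    by (simp add: fun_eq_iff heat_kernel_def exp_diff exp_minus field_simps)
  show ?thesis
    unfolding bessel_kernel_def set_lebesgue_integral_def integrand bessel_kernel_ennreal_def
    by (simp add: integral_eq_nn_integral heat_kernel_nonneg)
qed

lemma nn_integral_bessel_kernel_ennreal_mult: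
  assumes [measurable]: "\<phi> \<in> borel_measurable borel"
  shows "(\<integral>\<^sup>+z. bessel_kernel_ennreal z * \<phi> z \<partial>lborel)
    = (\<integral>\<^sup>+t. ennreal (indicator {0<..} t * exp (- t)) * (\<integral>\<^sup>+z. ennreal (heat_kernel t z) * \<phi> z \<partial>lborel) \<partial>lborel)"
    (is "_ = ?rhs")
proof -
  have "bessel_kernel_ennreal z * \<phi> z
      = (\<integral>\<^sup>+t. ennreal (indicator {0<..} t * exp (- t)) * (ennreal (heat_kernel t z) * \<phi> z) \<partial>lborel)" for z
    unfolding bessel_kernel_ennreal_def
    by (subst nn_integral_multc[symmetric])
       (auto intro!: nn_integral_cong simp: ennreal_mult heat_kernel_nonneg mult_ac)
  then have "(\<integral>\<^sup>+z. bessel_kernel_ennreal z * \<phi> z \<partial>lborel)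
      = (\<integral>\<^sup>+z. \<integral>\<^sup>+t. ennreal (indicator {0<..} t * exp (- t)) * (ennreal (heat_kernel t z) * \<phi> z) \<partial>lborel \<partial>lborel)"
    by simp
  also have "\<dots> = (\<integral>\<^sup>+t. \<integral>\<^sup>+z. ennreal (indicator {0<..} t * exp (- t)) * (ennreal (heat_kernel t z) * \<phi> z) \<partial>lborel \<partial>lborel)"
    by (rule lborel_pair.Fubini') measurable
  also have "\<dots> = ?rhs"
    by (simp add: nn_integral_cmult)
  finally show ?thesis .
qed

lemma nn_integral_bessel_kernel_ennreal: "(\<integral>\<^sup>+z. bessel_kernel_ennreal (z::'a::euclidean_space) \<partial>lborel) = 1"
proof -
  have "(\<integral>\<^sup>+z. bessel_kernel_ennreal (z::'a) \<partial>lborel)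
      = (\<integral>\<^sup>+t. ennreal (indicator {0<..} t * exp (- t)) * (\<integral>\<^sup>+z. ennreal (heat_kernel t (z::'a)) * 1 \<partial>lborel) \<partial>lborel)"
    using nn_integral_bessel_kernel_ennreal_mult[of "\<lambda>_. 1"] by simp
  also have "\<dots> = (\<integral>\<^sup>+t. ennreal (indicator {0<..} t * exp (- t)) \<partial>lborel)"
    by (intro nn_integral_cong) (simp add: nn_integral_heat_kernel indicator_def)
  also have "\<dots> = 1"
    using nn_integral_indicator_Ioi_exp[of 1] by simp
  finally show ?thesis .
qed

(* Only almost everywhere: enn2real sends \<infinity> to 0. *)
lemma AE_bessel_kernel_eq_ennreal:
  "AE z in lborel. ennreal (bessel_kernel (z::'a::euclidean_space)) = bessel_kernel_ennreal z"
proof -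
  have "AE z in lborel. bessel_kernel_ennreal (z::'a) \<noteq> \<infinity>"
    by (rule nn_integral_PInf_AE) (simp_all add: nn_integral_bessel_kernel_ennreal)
  then show ?thesis
    by eventually_elim (simp add: bessel_kernel_eq_enn2real ennreal_enn2real_if)
qed

lemma bessel_kernel_nonneg: "0 \<le> bessel_kernel z"
  by (simp add: bessel_kernel_eq_enn2real)

lemma borel_measurable_bessel_kernel[measurable]: "bessel_kernel \<in> borel_measurable borel"
  unfolding bessel_kernel_eq_enn2real[abs_def] by measurable

lemma has_bochner_integral_bessel_kernel:
  "has_bochner_integral lborel (bessel_kernel :: 'a::euclidean_space \<Rightarrow> real) 1"
proof -
  have "(\<integral>\<^sup>+z. ennreal (bessel_kernel (z::'a)) \<partial>lborel) = 1"
    by (simp add: nn_integral_cong_AE[OF AE_bessel_kernel_eq_ennreal] nn_integral_bessel_kernel_ennreal)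
  then show ?thesis
    by (simp add: has_bochner_integral_nn_integral bessel_kernel_nonneg)
qed

lemma integrable_bessel_kernel_mult_exp_norm:
  "integrable lborel (\<lambda>z::'a::euclidean_space. bessel_kernel z * exp (norm z / 4))"
proof (rule integrableI_nonneg)
  let ?c = "2 powr (real DIM('a) / 2)"
  have "(\<integral>\<^sup>+z. ennreal (bessel_kernel (z::'a) * exp (norm z / 4)) \<partial>lborel)
      = (\<integral>\<^sup>+z. bessel_kernel_ennreal (z::'a) * ennreal (exp (norm z / 4)) \<partial>lborel)"
    by (intro nn_integral_cong_AE)
       (use AE_bessel_kernel_eq_ennreal in \<open>auto elim!: eventually_mono simp: ennreal_mult bessel_kernel_nonneg\<close>)
  also have "\<dots> = (\<integral>\<^sup>+t. ennreal (indicator {0<..} t * exp (- t))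
      * (\<integral>\<^sup>+z. ennreal (heat_kernel t (z::'a)) * ennreal (exp (norm z / 4)) \<partial>lborel) \<partial>lborel)"
    by (rule nn_integral_bessel_kernel_ennreal_mult) measurable
  also have "\<dots> \<le> (\<integral>\<^sup>+t. ennreal ?c * ennreal (indicator {0<..} t * exp (- (7 / 8 * t))) \<partial>lborel)"
  proof (intro nn_integral_mono)
    fix t :: real
    show "ennreal (indicator {0<..} t * exp (- t))
        * (\<integral>\<^sup>+z. ennreal (heat_kernel t (z::'a)) * ennreal (exp (norm z / 4)) \<partial>lborel)
      \<le> ennreal ?c * ennreal (indicator {0<..} t * exp (- (7 / 8 * t)))"
    proof (cases "0 < t")
      case True
      have "ennreal (indicator {0<..} t * exp (- t))
          * (\<integral>\<^sup>+z. ennreal (heat_kernel t (z::'a)) * ennreal (exp (norm z / 4)) \<partial>lborel)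
        \<le> ennreal (exp (- t)) * ennreal (?c * exp (t / 8))"
        using True by (simp add: mult_left_mono nn_integral_heat_kernel_mult_exp_norm_le)
      also have "\<dots> = ennreal ?c * ennreal (indicator {0<..} t * exp (- (7 / 8 * t)))"
        using True by (simp add: mult_exp_exp mult_ac flip: ennreal_mult)
      finally show ?thesis .
    qed simp
  qed
  also have "\<dots> = ennreal ?c * ennreal (8 / 7)"
    using nn_integral_indicator_Ioi_exp[of "7 / 8"] by (simp add: nn_integral_cmult)
  finally show "(\<integral>\<^sup>+z. ennreal (bessel_kernel (z::'a) * exp (norm z / 4)) \<partial>lborel) < \<infinity>"
    by (simp add: order_le_less_trans flip: ennreal_mult)
qed (simp_all add: bessel_kernel_nonneg)

lemma bessel_op_powr_shifted_norm_square_close: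
  fixes x :: "'a::euclidean_space"
  assumes \<rho>: "0 < \<rho>" and d: "8 * \<bar>d\<bar> \<le> sqrt \<rho>"
  shows "integrable lborel (\<lambda>y. bessel_kernel (x - y) * (\<rho> + (norm y)\<^sup>2) powr (d / 2))"
    and "\<bar>bessel_op (\<lambda>y. (\<rho> + (norm y)\<^sup>2) powr (d / 2)) x - (\<rho> + (norm x)\<^sup>2) powr (d / 2)\<bar>
      \<le> 8 * \<bar>d\<bar> / sqrt \<rho> * (\<rho> + (norm x)\<^sup>2) powr (d / 2) * (\<integral>z. bessel_kernel (z::'a) * exp (norm z / 4) \<partial>lborel)"
proof -
  have k: "has_bochner_integral lborel (\<lambda>y. bessel_kernel (x - y)) 1"
    by (rule has_bochner_integral_lborel_reflect[OF has_bochner_integral_bessel_kernel])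
  have kw: "has_bochner_integral lborel (\<lambda>y. bessel_kernel (x - y) * exp (norm (x - y) / 4))
      (\<integral>z. bessel_kernel (z::'a) * exp (norm z / 4) \<partial>lborel)"
    using integrable_bessel_kernel_mult_exp_norm
    by (intro has_bochner_integral_lborel_reflect[where f="\<lambda>z. bessel_kernel z * exp (norm z / 4)"])
       (simp add: has_bochner_integral_iff)
  note close = abs_integral_kernel_mult_diff_le[where f="\<lambda>y. (\<rho> + (norm y)\<^sup>2) powr (d / 2)",
      OF k kw _ bessel_kernel_nonneg abs_powr_shifted_norm_square_diff_le[OF \<rho> d]]
  show "integrable lborel (\<lambda>y. bessel_kernel (x - y) * (\<rho> + (norm y)\<^sup>2) powr (d / 2))"
    using close(1) by simp
  show "\<bar>bessel_op (\<lambda>y. (\<rho> + (norm y)\<^sup>2) powr (d / 2)) x - (\<rho> + (norm x)\<^sup>2) powr (d / 2)\<bar>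
      \<le> 8 * \<bar>d\<bar> / sqrt \<rho> * (\<rho> + (norm x)\<^sup>2) powr (d / 2) * (\<integral>z. bessel_kernel (z::'a) * exp (norm z / 4) \<partial>lborel)"
    using close(2) by (simp add: bessel_op_def)
qed

lemma bessel_op_powr_shifted_norm_square_rel_close:
  fixes x :: "'a::euclidean_space"
  defines "M \<equiv> \<integral>z. bessel_kernel (z::'a) * exp (norm z / 4) \<partial>lborel"
  assumes \<delta>: "0 < \<delta>" "\<delta> \<le> 1" and d: "\<bar>d\<bar> \<le> D" and \<rho>: "(8 * D * (M + 1) / \<delta>)\<^sup>2 < \<rho>"
  shows "integrable lborel (\<lambda>y. bessel_kernel (x - y) * (\<rho> + (norm y)\<^sup>2) powr (d / 2))"
    and "\<bar>bessel_op (\<lambda>y. (\<rho> + (norm y)\<^sup>2) powr (d / 2)) x - (\<rho> + (norm x)\<^sup>2) powr (d / 2)\<bar>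
      \<le> \<delta> * (\<rho> + (norm x)\<^sup>2) powr (d / 2)"
proof -
  have "0 \<le> M"
    unfolding M_def by (simp add: bessel_kernel_nonneg)
  have "0 < \<rho>"
    using \<rho> zero_le_power2[of "8 * D * (M + 1) / \<delta>"] by linarith
  have "8 * D * (M + 1) / \<delta> \<le> sqrt \<rho>"
    using \<rho> by (simp add: real_le_rsqrt)
  moreover have "8 * \<bar>d\<bar> * (M + 1) \<le> 8 * D * (M + 1)"
    using d \<open>0 \<le> M\<close> by (simp add: mult_right_mono)
  ultimately have "8 * \<bar>d\<bar> * M + 8 * \<bar>d\<bar> \<le> \<delta> * sqrt \<rho>"
    using \<delta> by (simp add: field_simps)
  moreover have "\<delta> * sqrt \<rho> \<le> sqrt \<rho>"
    using \<delta> \<open>0 < \<rho>\<close> by (simp add: mult_left_le_one_le)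
  moreover have "0 \<le> 8 * \<bar>d\<bar> * M"
    using \<open>0 \<le> M\<close> by simp
  ultimately have d_small: "8 * \<bar>d\<bar> \<le> sqrt \<rho>" and "8 * \<bar>d\<bar> * M \<le> \<delta> * sqrt \<rho>"
    by linarith+
  then have "8 * \<bar>d\<bar> / sqrt \<rho> * M \<le> \<delta>"
    using \<open>0 < \<rho>\<close> by (simp add: field_simps)
  note close = bessel_op_powr_shifted_norm_square_close[OF \<open>0 < \<rho>\<close> d_small, of x, folded M_def]
  show "integrable lborel (\<lambda>y. bessel_kernel (x - y) * (\<rho> + (norm y)\<^sup>2) powr (d / 2))"
    by (rule close(1))
  show "\<bar>bessel_op (\<lambda>y. (\<rho> + (norm y)\<^sup>2) powr (d / 2)) x - (\<rho> + (norm x)\<^sup>2) powr (d / 2)\<bar>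
      \<le> \<delta> * (\<rho> + (norm x)\<^sup>2) powr (d / 2)"
    using close(2) mult_right_mono[OF \<open>8 * \<bar>d\<bar> / sqrt \<rho> * M \<le> \<delta>\<close>, of "(\<rho> + (norm x)\<^sup>2) powr (d / 2)"]
    by (simp add: mult_ac)
qed

theorem mainTheorem15:
  fixes \<epsilon> \<theta> D :: real
  assumes "0 < \<epsilon>" "\<epsilon> < 1" "0 < \<theta>" "\<theta> < 1" "0 \<le> D"
  shows "\<exists>\<rho>0 > 0. \<forall>d \<rho>. \<bar>d\<bar> \<le> D \<longrightarrow> \<rho> \<ge> \<rho>0 \<longrightarrow> (\<forall>x :: 'a :: euclidean_space.
           integrable lborel (\<lambda>y. bessel_kernel (x - y) * (\<rho> + (norm y)\<^sup>2) powr (d / 2)) \<and>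
           \<epsilon> * (\<rho> + (norm x)\<^sup>2) powr (d / 2) \<le> bessel_op (\<lambda>y. (\<rho> + (norm y)\<^sup>2) powr (d / 2)) x \<and>
           bessel_op (\<lambda>y. (\<rho> + (norm y)\<^sup>2) powr (d / 2)) x \<le> (1 / \<theta>) * (\<rho> + (norm x)\<^sup>2) powr (d / 2))"
proof -
  define M where "M = (\<integral>z. bessel_kernel (z::'a) * exp (norm z / 4) \<partial>lborel)"
  define \<delta> where "\<delta> = min (1 - \<epsilon>) (1 / \<theta> - 1)"
  have \<delta>: "0 < \<delta>" "\<delta> \<le> 1" "\<delta> \<le> 1 - \<epsilon>" "\<delta> \<le> 1 / \<theta> - 1"
    unfolding \<delta>_def using assms by (auto simp: field_simps)
  show ?thesis
  proof (intro exI[of _ "(8 * D * (M + 1) / \<delta>)\<^sup>2 + 1"] conjI allI impI)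
    fix d \<rho> :: real and x :: 'a
    assume "\<bar>d\<bar> \<le> D" "(8 * D * (M + 1) / \<delta>)\<^sup>2 + 1 \<le> \<rho>"
    note rel_close = bessel_op_powr_shifted_norm_square_rel_close[OF \<delta>(1,2) this(1), of \<rho> x, folded M_def]
    then show "integrable lborel (\<lambda>y. bessel_kernel (x - y) * (\<rho> + (norm y)\<^sup>2) powr (d / 2))"
      using \<open>_ \<le> \<rho>\<close> by simp
    let ?w = "(\<rho> + (norm x)\<^sup>2) powr (d / 2)"
    have "\<epsilon> * ?w \<le> (1 - \<delta>) * ?w" "(1 + \<delta>) * ?w \<le> (1 / \<theta>) * ?w"
      using \<delta> by (intro mult_right_mono; simp)+
    moreover have "\<bar>bessel_op (\<lambda>y. (\<rho> + (norm y)\<^sup>2) powr (d / 2)) x - ?w\<bar> \<le> \<delta> * ?w"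
      using rel_close(2) \<open>_ \<le> \<rho>\<close> by simp
    ultimately show "\<epsilon> * ?w \<le> bessel_op (\<lambda>y. (\<rho> + (norm y)\<^sup>2) powr (d / 2)) x"
      and "bessel_op (\<lambda>y. (\<rho> + (norm y)\<^sup>2) powr (d / 2)) x \<le> (1 / \<theta>) * ?w"
      by (simp_all only: abs_le_iff left_diff_distrib distrib_right mult_1_left) linarith+
  qed (simp add: add_nonneg_pos)
qed

end
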